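(* Let $\mathbb{K}$ be an algebraically closed field of characteristic zero and let $Y,Z$ be irreducible affine varieties with $Y\times\mathbb{A}^1\cong Z\times\mathbb{A}^1$. Then $Y$ and $Z$ are of the same type (A, B or C).
   Context: A derivation of $\mathbb{K}[X]$ is locally nilpotent (LND) if every element is killed by some power of it; a slice of an LND $\partial$ is $s$ with $\partial(s)=1$. $\mathrm{HD}^*(X)$ is the subalgebra of $\mathbb{K}[X]$ generated by the kernels of all LNDs of $\mathbb{K}[X]$ having a slice. A variety $Y$ is rigid if $\mathbb{K}[Y]$ has no nonzero LND. For an irreducible affine variety $Y$ with $X=Y\times\mathbb{A}^1$, $\mathbb{K}[X]=\mathbb{K}[Y][u]$: $Y$ is of type A if $\mathrm{HD}^*(X)=\mathbb{K}[X]$; of type B if $\mathrm{HD}^*(X)$ is not finitely generated; of type C if $Y$ is rigid and $\mathrm{HD}^*(X)=\mathbb{K}[Y]$. Every such $Y$ is of exactly one of these types. *)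

theory Defs
  imports "HOL-Computational_Algebra.Polynomial"
begin

definition alg_closed_field :: "'k::field itself \<Rightarrow> bool" where
  "alg_closed_field _ \<longleftrightarrow> (\<forall>p :: 'k poly. degree p \<ge> 1 \<longrightarrow> (\<exists>x. poly p x = 0))"

(* A K-algebra structure on a commutative ring 'a is given by a ring hom phi : K -> 'a *)
definition k_algebra :: "('k::field \<Rightarrow> 'a::comm_ring_1) \<Rightarrow> bool" where
  "k_algebra \<phi> \<longleftrightarrow> \<phi> 1 = 1 \<and> (\<forall>a b. \<phi> (a + b) = \<phi> a + \<phi> b) \<and> (\<forall>a b. \<phi> (a * b) = \<phi> a * \<phi> b)"

inductive_set subalg_gen :: "('k \<Rightarrow> 'a::comm_ring_1) \<Rightarrow> 'a set \<Rightarrow> 'a set"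
  for \<phi> :: "'k \<Rightarrow> 'a" and S :: "'a set" where
  gen: "x \<in> S \<Longrightarrow> x \<in> subalg_gen \<phi> S"
| scal: "\<phi> c \<in> subalg_gen \<phi> S"
| add: "x \<in> subalg_gen \<phi> S \<Longrightarrow> y \<in> subalg_gen \<phi> S \<Longrightarrow> x + y \<in> subalg_gen \<phi> S"
| neg: "x \<in> subalg_gen \<phi> S \<Longrightarrow> - x \<in> subalg_gen \<phi> S"
| mult: "x \<in> subalg_gen \<phi> S \<Longrightarrow> y \<in> subalg_gen \<phi> S \<Longrightarrow> x * y \<in> subalg_gen \<phi> S"

definition fin_gen :: "('k \<Rightarrow> 'a::comm_ring_1) \<Rightarrow> 'a set \<Rightarrow> bool" where
  "fin_gen \<phi> A \<longleftrightarrow> (\<exists>S. finite S \<and> S \<subseteq> A \<and> subalg_gen \<phi> S = A)"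

(* Coordinate ring of an irreducible affine variety: a finitely generated K-algebra
   which is an integral domain (the domain property is imposed via the type class idom) *)
definition affine_domain :: "('k::field \<Rightarrow> 'a::idom) \<Rightarrow> bool" where
  "affine_domain \<phi> \<longleftrightarrow> k_algebra \<phi> \<and> fin_gen \<phi> UNIV"

definition is_derivation :: "('k \<Rightarrow> 'a::comm_ring_1) \<Rightarrow> ('a \<Rightarrow> 'a) \<Rightarrow> bool" where
  "is_derivation \<phi> D \<longleftrightarrow>
     (\<forall>x y. D (x + y) = D x + D y) \<and>
     (\<forall>x y. D (x * y) = x * D y + y * D x) \<and>
     (\<forall>c x. D (\<phi> c * x) = \<phi> c * D x)"

definition LND :: "('k \<Rightarrow> 'a::comm_ring_1) \<Rightarrow> ('a \<Rightarrow> 'a) \<Rightarrow> bool" where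
  "LND \<phi> D \<longleftrightarrow> is_derivation \<phi> D \<and> (\<forall>x. \<exists>n. (D ^^ n) x = 0)"

definition has_slice :: "('a::comm_ring_1 \<Rightarrow> 'a) \<Rightarrow> bool" where
  "has_slice D \<longleftrightarrow> (\<exists>s. D s = 1)"

definition ker :: "('a::comm_ring_1 \<Rightarrow> 'a) \<Rightarrow> 'a set" where
  "ker D = {x. D x = 0}"

definition HDstar :: "('k \<Rightarrow> 'a::comm_ring_1) \<Rightarrow> 'a set" where
  "HDstar \<phi> = subalg_gen \<phi> (\<Union> {ker D | D. LND \<phi> D \<and> has_slice D})"

definition rigid :: "('k \<Rightarrow> 'a::comm_ring_1) \<Rightarrow> bool" where
  "rigid \<phi> \<longleftrightarrow> (\<forall>D. LND \<phi> D \<longrightarrow> D = (\<lambda>_. 0))"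

(* K-algebra structure on K[Y][u] = K[Y x A^1] *)
definition cyl :: "('k \<Rightarrow> 'a::comm_ring_1) \<Rightarrow> 'k \<Rightarrow> 'a poly" where
  "cyl \<phi> c = [:\<phi> c:]"

definition type_A :: "('k \<Rightarrow> 'a::comm_ring_1) \<Rightarrow> bool" where
  "type_A \<phi> \<longleftrightarrow> HDstar (cyl \<phi>) = UNIV"

definition type_B :: "('k \<Rightarrow> 'a::comm_ring_1) \<Rightarrow> bool" where
  "type_B \<phi> \<longleftrightarrow> \<not> fin_gen (cyl \<phi>) (HDstar (cyl \<phi>))"

definition type_C :: "('k \<Rightarrow> 'a::comm_ring_1) \<Rightarrow> bool" where
  "type_C \<phi> \<longleftrightarrow> rigid \<phi> \<and> HDstar (cyl \<phi>) = range (\<lambda>a. [:a:])"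

definition k_alg_iso :: "('k \<Rightarrow> 'a::comm_ring_1) \<Rightarrow> ('k \<Rightarrow> 'b::comm_ring_1) \<Rightarrow> ('a \<Rightarrow> 'b) \<Rightarrow> bool" where
  "k_alg_iso \<phi> \<psi> f \<longleftrightarrow> bij f \<and> (\<forall>x y. f (x + y) = f x + f y) \<and>
      (\<forall>x y. f (x * y) = f x * f y) \<and> (\<forall>c. f (\<phi> c) = \<psi> c)"

end

theory Submission
  imports Defs
begin

(* Conjugation by an isomorphism K[Y][u] = K[Z][u] carries LNDs with a slice to LNDs with a slice
   and their kernels onto each other, so it maps HD* onto HD*; types A and B only depend on HD*.
   For type C, HD*(Y x A^1) = K[Y] forces the isomorphism to map K[Y] onto K[Z]: otherwise
   conjugating d/du yields a derivation of K[Z][u] that kills K[Z] (which lies in HD*, the image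
   of K[Y]) and a nonconstant polynomial; in characteristic zero such a derivation is zero, yet it
   has a slice. The restricted isomorphism K[Y] = K[Z] then transfers rigidity. *)

context
  fixes \<phi> :: "'k \<Rightarrow> 'a::comm_ring_1" and \<psi> :: "'k \<Rightarrow> 'b::comm_ring_1" and f :: "'a \<Rightarrow> 'b"
  assumes iso: "k_alg_iso \<phi> \<psi> f"
begin

lemma k_alg_iso_bij: "bij f"
  using iso unfolding k_alg_iso_def by blast

lemma k_alg_iso_add: "f (x + y) = f x + f y"
  using iso unfolding k_alg_iso_def by blast

lemma k_alg_iso_mult: "f (x * y) = f x * f y"
  using iso unfolding k_alg_iso_def by blast

lemma k_alg_iso_scalar: "f (\<phi> c) = \<psi> c"
  using iso unfolding k_alg_iso_def by blast

lemma k_alg_iso_additive: "additive f"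
  by unfold_locales (rule k_alg_iso_add)

lemma k_alg_iso_0: "f 0 = 0"
  by (rule additive.zero[OF k_alg_iso_additive])

lemma k_alg_iso_inv_f_f [simp]: "inv f (f x) = x"
  using k_alg_iso_bij by (simp add: bij_is_inj)

lemma k_alg_iso_f_inv_f [simp]: "f (inv f y) = y"
  using k_alg_iso_bij by (simp add: bij_is_surj surj_f_inv_f)

lemma k_alg_iso_eq_0_iff: "f x = 0 \<longleftrightarrow> x = 0"
  by (metis k_alg_iso_0 k_alg_iso_inv_f_f)

lemma k_alg_iso_subset_image: "inv f ` B \<subseteq> A \<Longrightarrow> B \<subseteq> f ` A"
proof
  fix y assume "inv f ` B \<subseteq> A" "y \<in> B"
  then show "y \<in> f ` A" using rev_image_eqI[of "inv f y" A y f] by auto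
qed

lemma k_alg_iso_1: "f 1 = 1"
  using k_alg_iso_mult[of 1 "inv f 1"] by simp

lemma k_alg_iso_inv: "k_alg_iso \<psi> \<phi> (inv f)"
  unfolding k_alg_iso_def
  by (metis k_alg_iso_bij bij_imp_bij_inv k_alg_iso_inv_f_f k_alg_iso_f_inv_f
      k_alg_iso_add k_alg_iso_mult k_alg_iso_scalar)

end

lemma subalg_gen_mono:
  assumes "S \<subseteq> T"
  shows "subalg_gen \<phi> S \<subseteq> subalg_gen \<phi> T"
proof
  fix x assume "x \<in> subalg_gen \<phi> S"
  then show "x \<in> subalg_gen \<phi> T"
    by (induction rule: subalg_gen.induct) (use assms in \<open>auto intro: subalg_gen.intros\<close>)
qed

lemma image_subalg_gen_subset:
  fixes f :: "'a::comm_ring_1 \<Rightarrow> 'b::comm_ring_1"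
  assumes "additive f" and "\<And>x y. f (x * y) = f x * f y" and "\<And>c. f (\<phi> c) = \<psi> c"
  shows "f ` subalg_gen \<phi> S \<subseteq> subalg_gen \<psi> (f ` S)"
proof
  fix y assume "y \<in> f ` subalg_gen \<phi> S"
  then obtain x where x: "x \<in> subalg_gen \<phi> S" and y: "y = f x" by blast
  from x have "f x \<in> subalg_gen \<psi> (f ` S)"
    by (induction rule: subalg_gen.induct)
      (auto intro: subalg_gen.intros
        simp: assms additive.add[OF assms(1)] additive.minus[OF assms(1)])
  then show "y \<in> subalg_gen \<psi> (f ` S)" using y by simp
qed

lemma k_alg_iso_image_subalg_gen_subset:
  "k_alg_iso \<phi> \<psi> f \<Longrightarrow> f ` subalg_gen \<phi> S \<subseteq> subalg_gen \<psi> (f ` S)"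
  by (rule image_subalg_gen_subset) (simp_all add: k_alg_iso_additive k_alg_iso_mult k_alg_iso_scalar)

lemma k_alg_iso_image_subalg_gen:
  assumes iso: "k_alg_iso \<phi> \<psi> f"
  shows "f ` subalg_gen \<phi> S = subalg_gen \<psi> (f ` S)"
proof
  show "f ` subalg_gen \<phi> S \<subseteq> subalg_gen \<psi> (f ` S)"
    using iso by (rule k_alg_iso_image_subalg_gen_subset)
  have "inv f ` subalg_gen \<psi> (f ` S) \<subseteq> subalg_gen \<phi> S"
    using k_alg_iso_image_subalg_gen_subset[OF k_alg_iso_inv[OF iso], of "f ` S"]
    by (simp add: image_image k_alg_iso_inv_f_f[OF iso])
  then show "subalg_gen \<psi> (f ` S) \<subseteq> f ` subalg_gen \<phi> S"
    using k_alg_iso_subset_image[OF iso] by blast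
qed

lemma k_alg_iso_fin_gen_image:
  assumes iso: "k_alg_iso \<phi> \<psi> f" and "fin_gen \<phi> H"
  shows "fin_gen \<psi> (f ` H)"
proof -
  obtain S where "finite S" "S \<subseteq> H" "subalg_gen \<phi> S = H"
    using assms(2) unfolding fin_gen_def by blast
  then show ?thesis
    unfolding fin_gen_def using k_alg_iso_image_subalg_gen[OF iso, of S]
    by (metis finite_imageI image_mono)
qed

lemma funpow_conjugate:
  assumes "bij f"
  shows "(f \<circ> D \<circ> inv f) ^^ n = f \<circ> (D ^^ n) \<circ> inv f"
proof (induction n)
  case 0
  show ?case using assms by (simp add: fun_eq_iff bij_is_surj surj_f_inv_f)
next
  case (Suc n)
  then show ?case using assms by (simp add: bij_is_inj fun_eq_iff)
qed

lemma k_alg_iso_derivation_conjugate: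
  assumes iso: "k_alg_iso \<phi> \<psi> f" and "is_derivation \<phi> D"
  shows "is_derivation \<psi> (f \<circ> D \<circ> inv f)"
proof -
  note inv_iso = k_alg_iso_inv[OF iso]
  have add: "D (x + y) = D x + D y" and mult: "D (x * y) = x * D y + y * D x"
    and scalar: "D (\<phi> c * x) = \<phi> c * D x" for x y c
    using assms(2) unfolding is_derivation_def by blast+
  show ?thesis
    unfolding is_derivation_def comp_def
  proof (intro conjI allI)
    fix x y
    show "f (D (inv f (x + y))) = f (D (inv f x)) + f (D (inv f y))"
      by (simp add: k_alg_iso_add[OF inv_iso] add k_alg_iso_add[OF iso])
    show "f (D (inv f (x * y))) = x * f (D (inv f y)) + y * f (D (inv f x))"
      by (simp add: k_alg_iso_mult[OF inv_iso] mult k_alg_iso_add[OF iso] k_alg_iso_mult[OF iso]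
          k_alg_iso_f_inv_f[OF iso])
  next
    fix c x
    show "f (D (inv f (\<psi> c * x))) = \<psi> c * f (D (inv f x))"
      by (simp add: k_alg_iso_mult[OF inv_iso] k_alg_iso_scalar[OF inv_iso] scalar
          k_alg_iso_mult[OF iso] k_alg_iso_scalar[OF iso])
  qed
qed

lemma k_alg_iso_LND_conjugate:
  assumes iso: "k_alg_iso \<phi> \<psi> f" and "LND \<phi> D"
  shows "LND \<psi> (f \<circ> D \<circ> inv f)"
proof -
  have "\<exists>n. ((f \<circ> D \<circ> inv f) ^^ n) y = 0" for y
  proof -
    obtain n where "(D ^^ n) (inv f y) = 0" using assms(2) unfolding LND_def by blast
    then show ?thesis
      by (auto simp: funpow_conjugate[OF k_alg_iso_bij[OF iso]] k_alg_iso_eq_0_iff[OF iso])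
  qed
  with assms show ?thesis
    unfolding LND_def by (simp add: k_alg_iso_derivation_conjugate)
qed

lemma k_alg_iso_has_slice_conjugate:
  assumes iso: "k_alg_iso \<phi> \<psi> f" and "has_slice D"
  shows "has_slice (f \<circ> D \<circ> inv f)"
proof -
  obtain s where "D s = 1" using assms(2) unfolding has_slice_def by blast
  then have "(f \<circ> D \<circ> inv f) (f s) = 1" by (simp add: k_alg_iso_inv_f_f[OF iso] k_alg_iso_1[OF iso])
  then show ?thesis unfolding has_slice_def by blast
qed

lemma k_alg_iso_ker_conjugate:
  assumes iso: "k_alg_iso \<phi> \<psi> f"
  shows "ker (f \<circ> D \<circ> inv f) = f ` ker D"
proof -
  have "y \<in> f ` {x. D x = 0}" if "D (inv f y) = 0" for y
    using that rev_image_eqI[of "inv f y" _ y f] by (simp add: k_alg_iso_f_inv_f[OF iso])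
  then show ?thesis
    unfolding ker_def by (auto simp: k_alg_iso_eq_0_iff[OF iso] k_alg_iso_inv_f_f[OF iso])
qed

lemma k_alg_iso_image_HDstar_subset:
  assumes iso: "k_alg_iso \<phi> \<psi> f"
  shows "f ` HDstar \<phi> \<subseteq> HDstar \<psi>"
proof -
  have "f ` \<Union> {ker D | D. LND \<phi> D \<and> has_slice D} \<subseteq> \<Union> {ker D | D. LND \<psi> D \<and> has_slice D}"
  proof clarify
    fix D x assume "LND \<phi> D" "has_slice D" "x \<in> ker D"
    then show "f x \<in> \<Union> {ker D | D. LND \<psi> D \<and> has_slice D}"
      using k_alg_iso_LND_conjugate[OF iso] k_alg_iso_has_slice_conjugate[OF iso]
        k_alg_iso_ker_conjugate[OF iso, of D] by blast
  qed
  then show ?thesis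
    unfolding HDstar_def k_alg_iso_image_subalg_gen[OF iso] by (rule subalg_gen_mono)
qed

lemma k_alg_iso_image_HDstar:
  assumes iso: "k_alg_iso \<phi> \<psi> f"
  shows "f ` HDstar \<phi> = HDstar \<psi>"
proof
  show "f ` HDstar \<phi> \<subseteq> HDstar \<psi>" using iso by (rule k_alg_iso_image_HDstar_subset)
  have "inv f ` HDstar \<psi> \<subseteq> HDstar \<phi>"
    using k_alg_iso_inv[OF iso] by (rule k_alg_iso_image_HDstar_subset)
  then show "HDstar \<psi> \<subseteq> f ` HDstar \<phi>"
    using k_alg_iso_subset_image[OF iso] by blast
qed

lemma k_alg_iso_rigid:
  assumes iso: "k_alg_iso \<phi> \<psi> f" and "rigid \<phi>"
  shows "rigid \<psi>"
  unfolding rigid_def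
proof (intro allI impI)
  fix D assume "LND \<psi> D"
  then have "LND \<phi> (inv f \<circ> D \<circ> f)"
    using k_alg_iso_LND_conjugate[OF k_alg_iso_inv[OF iso]]
    by (simp add: inv_inv_eq[OF k_alg_iso_bij[OF iso]])
  then have "inv f (D (f x)) = 0" for x
    using assms(2) unfolding rigid_def by (metis comp_apply)
  then have "D (f (inv f y)) = 0" for y
    by (metis k_alg_iso_eq_0_iff[OF k_alg_iso_inv[OF iso]])
  then show "D = (\<lambda>_. 0)" by (simp add: fun_eq_iff k_alg_iso_f_inv_f[OF iso])
qed

lemma k_alg_iso_type_A_iff:
  assumes iso: "k_alg_iso (cyl \<phi>) (cyl \<psi>) f"
  shows "type_A \<phi> \<longleftrightarrow> type_A \<psi>"
proof -
  have "f ` HDstar (cyl \<phi>) = f ` UNIV \<longleftrightarrow> HDstar (cyl \<phi>) = UNIV"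
    using k_alg_iso_bij[OF iso] by (simp add: bij_is_inj inj_image_eq_iff)
  then show ?thesis
    unfolding type_A_def k_alg_iso_image_HDstar[OF iso, symmetric]
    using k_alg_iso_bij[OF iso] by (simp add: bij_is_surj)
qed

lemma k_alg_iso_type_B_iff:
  assumes iso: "k_alg_iso (cyl \<phi>) (cyl \<psi>) f"
  shows "type_B \<phi> \<longleftrightarrow> type_B \<psi>"
proof -
  have "inv f ` f ` HDstar (cyl \<phi>) = HDstar (cyl \<phi>)"
    by (simp add: image_image k_alg_iso_inv_f_f[OF iso])
  then show ?thesis
    unfolding type_B_def k_alg_iso_image_HDstar[OF iso, symmetric]
    using k_alg_iso_fin_gen_image[OF iso] k_alg_iso_fin_gen_image[OF k_alg_iso_inv[OF iso]]
    by metis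
qed

lemma is_derivation_pderiv: "is_derivation (cyl \<phi>) (pderiv :: 'a::idom poly \<Rightarrow> 'a poly)"
  unfolding is_derivation_def cyl_def
  by (simp add: pderiv_add pderiv_mult pderiv_smult)

lemma LND_pderiv: "LND (cyl \<phi>) (pderiv :: 'a::idom poly \<Rightarrow> 'a poly)"
proof -
  have "(pderiv ^^ n) p = 0" if "degree p < n" for p :: "'a poly" and n
    by (rule poly_eqI) (use that in \<open>simp add: coeff_higher_pderiv coeff_eq_0\<close>)
  then show ?thesis
    unfolding LND_def using is_derivation_pderiv by blast
qed

lemma has_slice_pderiv: "has_slice (pderiv :: 'a::idom poly \<Rightarrow> 'a poly)"
  unfolding has_slice_def by (rule exI[of _ "[:0, 1:]"]) (simp add: pderiv_pCons)

lemma const_poly_subset_HDstar_cyl: "range (\<lambda>a. [:a:]) \<subseteq> HDstar (cyl (\<phi> :: 'k \<Rightarrow> 'a::idom))"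
proof clarify
  fix a :: 'a
  have "[:a:] \<in> ker pderiv" unfolding ker_def by (simp add: pderiv_pCons)
  then show "[:a:] \<in> HDstar (cyl \<phi>)"
    unfolding HDstar_def using LND_pderiv has_slice_pderiv by (blast intro: subalg_gen.gen)
qed

lemma poly_derivation_eq_pderiv_mult:
  fixes D :: "'a::idom poly \<Rightarrow> 'a poly"
  assumes add: "\<And>p q. D (p + q) = D p + D q"
    and mult: "\<And>p q. D (p * q) = p * D q + q * D p"
    and const: "\<And>a. D [:a:] = 0"
  shows "D p = pderiv p * D [:0, 1:]"
proof (induction p)
  case 0
  show ?case using const[of 0] by simp
next
  case (pCons a p)
  have "pCons a p = [:a:] + [:0, 1:] * p"
    by (simp add: poly_eqI coeff_pCons split: nat.split)
  then have "D (pCons a p) = [:0, 1:] * D p + p * D [:0, 1:]"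
    by (simp only: add mult const add_0_left)
  also have "\<dots> = pderiv (pCons a p) * D [:0, 1:]"
    using pCons.IH by (simp add: pderiv_pCons algebra_simps)
  finally show ?case .
qed

lemma k_algebra_of_nat:
  assumes "k_algebra \<phi>"
  shows "\<phi> (of_nat n) = of_nat n"
proof (induction n)
  case 0
  have "additive \<phi>" by unfold_locales (use assms in \<open>simp add: k_algebra_def\<close>)
  then show ?case by (simp add: additive.zero)
next
  case (Suc n)
  then show ?case using assms by (simp add: k_algebra_def)
qed

lemma k_algebra_of_nat_neq_0:
  fixes \<phi> :: "'k::field_char_0 \<Rightarrow> 'a::comm_ring_1"
  assumes alg: "k_algebra \<phi>" and "n \<noteq> 0"
  shows "(of_nat n :: 'a) \<noteq> 0"
proof
  assume "(of_nat n :: 'a) = 0"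
  moreover have "\<phi> (of_nat n * inverse (of_nat n)) = \<phi> (of_nat n) * \<phi> (inverse (of_nat n))"
    using alg unfolding k_algebra_def by blast
  ultimately have "\<phi> 1 = 0" using \<open>n \<noteq> 0\<close> by (simp add: k_algebra_of_nat[OF alg])
  then show False using alg unfolding k_algebra_def by simp
qed

lemma k_algebra_pderiv_eq_0_iff:
  fixes \<phi> :: "'k::field_char_0 \<Rightarrow> 'a::idom" and p :: "'a poly"
  assumes "k_algebra \<phi>"
  shows "pderiv p = 0 \<longleftrightarrow> degree p = 0"
proof
  assume "degree p = 0"
  then show "pderiv p = 0" by (metis degree_0_id pderiv_singleton)
next
  assume "pderiv p = 0"
  show "degree p = 0"
  proof (rule ccontr)
    assume "degree p \<noteq> 0"
    then have "coeff (pderiv p) (degree p - 1) = of_nat (degree p) * lead_coeff p"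
      by (simp add: coeff_pderiv)
    also have "\<dots> \<noteq> 0"
      using \<open>degree p \<noteq> 0\<close> k_algebra_of_nat_neq_0[OF assms] by auto
    finally show False using \<open>pderiv p = 0\<close> by simp
  qed
qed

lemma poly_derivation_eq_0:
  fixes \<psi> :: "'k::field_char_0 \<Rightarrow> 'b::idom" and D :: "'b poly \<Rightarrow> 'b poly"
  assumes "k_algebra \<psi>"
    and add: "\<And>p q. D (p + q) = D p + D q"
    and mult: "\<And>p q. D (p * q) = p * D q + q * D p"
    and const: "\<And>b. D [:b:] = 0"
    and "D q = 0" and "degree q \<noteq> 0"
  shows "D p = 0"
proof -
  note chain_rule = poly_derivation_eq_pderiv_mult[of D, OF add mult const]
  have "pderiv q \<noteq> 0"
    using \<open>degree q \<noteq> 0\<close> by (simp add: k_algebra_pderiv_eq_0_iff[OF assms(1)])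
  then have "D [:0, 1:] = 0"
    using \<open>D q = 0\<close> chain_rule[of q] by simp
  then show ?thesis using chain_rule[of p] by simp
qed

lemma k_alg_iso_cyl_image_const:
  fixes \<phi> :: "'k::field_char_0 \<Rightarrow> 'a::idom" and \<psi> :: "'k \<Rightarrow> 'b::idom"
  assumes iso: "k_alg_iso (cyl \<phi>) (cyl \<psi>) f" and "k_algebra \<psi>"
    and HD: "HDstar (cyl \<phi>) = range (\<lambda>a. [:a:])"
  shows "f ` range (\<lambda>a. [:a:]) = range (\<lambda>b. [:b:])"
proof
  show const_sub: "range (\<lambda>b. [:b:]) \<subseteq> f ` range (\<lambda>a. [:a:])"
    using const_poly_subset_HDstar_cyl[of \<psi>]
    unfolding k_alg_iso_image_HDstar[OF iso, symmetric] HD .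
  show "f ` range (\<lambda>a. [:a:]) \<subseteq> range (\<lambda>b. [:b:])"
  proof (rule ccontr)
    assume "\<not> ?thesis"
    then obtain a where "f [:a:] \<notin> range (\<lambda>b. [:b:])" by blast
    then have "degree (f [:a:]) \<noteq> 0" by (metis degree_0_id rangeI)
    define D where "D = f \<circ> pderiv \<circ> inv f"
    have der: "is_derivation (cyl \<psi>) D"
      unfolding D_def using iso is_derivation_pderiv by (rule k_alg_iso_derivation_conjugate)
    have "D [:b:] = 0" for b
    proof -
      obtain a' where "[:b:] = f [:a':]" using const_sub by blast
      then show ?thesis unfolding D_def by (simp add: k_alg_iso_inv_f_f[OF iso] k_alg_iso_0[OF iso])
    qed
    moreover have "D (f [:a:]) = 0"
      unfolding D_def by (simp add: k_alg_iso_inv_f_f[OF iso] k_alg_iso_0[OF iso])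
    ultimately have "D (f [:0, 1:]) = 0"
      using der \<open>degree (f [:a:]) \<noteq> 0\<close> \<open>k_algebra \<psi>\<close>
      unfolding is_derivation_def by (blast intro: poly_derivation_eq_0)
    moreover have "D (f [:0, 1:]) = 1"
    proof -
      have "pderiv [:0, 1:] = (1 :: 'a poly)" by (simp add: pderiv_pCons)
      then show ?thesis unfolding D_def by (simp add: k_alg_iso_inv_f_f[OF iso] k_alg_iso_1[OF iso])
    qed
    ultimately show False by simp
  qed
qed

lemma k_alg_iso_cyl_restrict:
  assumes iso: "k_alg_iso (cyl \<phi>) (cyl \<psi>) f"
    and image_const: "f ` range (\<lambda>a. [:a:]) = range (\<lambda>b. [:b:])"
  shows "k_alg_iso \<phi> \<psi> (\<lambda>a. coeff (f [:a:]) 0)"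
proof -
  define g where "g = (\<lambda>a. coeff (f [:a:]) 0)"
  have f_const: "f [:a:] = [:g a:]" for a
  proof -
    obtain b where "f [:a:] = [:b:]" using image_const by blast
    then show ?thesis by (simp add: g_def)
  qed
  have "inj g"
  proof (rule injI)
    fix a a' assume "g a = g a'"
    then have "f [:a:] = f [:a':]" by (simp add: f_const)
    then have "[:a:] = [:a':]" by (metis k_alg_iso_inv_f_f[OF iso])
    then show "a = a'" by simp
  qed
  moreover have "b \<in> range g" for b
  proof -
    have "[:b:] \<in> f ` range (\<lambda>a. [:a:])" using image_const by blast
    then obtain a where "[:b:] = f [:a:]" by blast
    then show ?thesis by (simp add: f_const)
  qed
  moreover have "g (x + y) = g x + g y" for x y
    using k_alg_iso_add[OF iso, of "[:x:]" "[:y:]"] by (simp add: f_const)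
  moreover have "g (x * y) = g x * g y" for x y
    using k_alg_iso_mult[OF iso, of "[:x:]" "[:y:]"] by (simp add: f_const mult.commute)
  moreover have "g (\<phi> c) = \<psi> c" for c
    using k_alg_iso_scalar[OF iso, of c] by (simp add: cyl_def f_const)
  ultimately have "k_alg_iso \<phi> \<psi> g" unfolding k_alg_iso_def bij_def surj_def by blast
  then show ?thesis by (simp only: g_def)
qed

lemma k_alg_iso_type_C:
  fixes \<phi> :: "'k::field_char_0 \<Rightarrow> 'a::idom" and \<psi> :: "'k \<Rightarrow> 'b::idom"
  assumes iso: "k_alg_iso (cyl \<phi>) (cyl \<psi>) f" and "k_algebra \<psi>" and "type_C \<phi>"
  shows "type_C \<psi>"
proof -
  have HD: "HDstar (cyl \<phi>) = range (\<lambda>a. [:a:])" and "rigid \<phi>"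
    using \<open>type_C \<phi>\<close> unfolding type_C_def by blast+
  note image_const = k_alg_iso_cyl_image_const[OF iso \<open>k_algebra \<psi>\<close> HD]
  have "HDstar (cyl \<psi>) = range (\<lambda>b. [:b:])"
    using k_alg_iso_image_HDstar[OF iso] image_const HD by simp
  moreover have "rigid \<psi>"
    using k_alg_iso_cyl_restrict[OF iso image_const] \<open>rigid \<phi>\<close> by (rule k_alg_iso_rigid)
  ultimately show ?thesis unfolding type_C_def by blast
qed

theorem corollary3:
  fixes \<phi> :: "'k::field_char_0 \<Rightarrow> 'a::idom" and \<psi> :: "'k \<Rightarrow> 'b::idom"
  assumes "alg_closed_field TYPE('k)"
    and "affine_domain \<phi>" and "affine_domain \<psi>"
    and "\<exists>f. k_alg_iso (cyl \<phi>) (cyl \<psi>) f"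
  shows "(type_A \<phi> \<longleftrightarrow> type_A \<psi>) \<and> (type_B \<phi> \<longleftrightarrow> type_B \<psi>) \<and> (type_C \<phi> \<longleftrightarrow> type_C \<psi>)"
proof -
  obtain f where iso: "k_alg_iso (cyl \<phi>) (cyl \<psi>) f" using assms(4) by blast
  have "k_algebra \<phi>" and "k_algebra \<psi>"
    using assms(2,3) unfolding affine_domain_def by auto
  then have "type_C \<phi> \<longleftrightarrow> type_C \<psi>"
    using k_alg_iso_type_C[OF iso] k_alg_iso_type_C[OF k_alg_iso_inv[OF iso]] by blast
  then show ?thesis
    using k_alg_iso_type_A_iff[OF iso] k_alg_iso_type_B_iff[OF iso] by blast
qed

end
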